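(* Let $X,Y,Z\in\mathbb{Z}[i]$ satisfy $X^2+iY^2=Z^2$, $\gcd(X,Y)\in U$, $XYZ\neq0$, with $X,Z\in O^I$ and $Y=(1+i)^2W$, $W\in G$. Then there exist an integer $t$, $0\le t\le3$, and $P,Q\in G$ with $\gcd(P,Q)=1$ such that $$X=i^{t+1}\big(P^2-(-1)^t iQ^2\big),\quad Y=(1+i)^2PQ,\quad Z=i^{t+1}\big(P^2+(-1)^t iQ^2\big).$$
   Context: $\mathbb{Z}[i]$ is the ring of Gaussian integers, $U=\{1,-1,i,-i\}$ its unit group; $R(\alpha),I(\alpha)$ are real and imaginary parts. $\gcd(x,y)\in U$ means no common non-unit divisor; for $P,Q\in G$, $\gcd(P,Q)=1$ means no common prime factor. $O=\{\alpha: R(\alpha)+I(\alpha)\equiv1\pmod 2\}$, $O^I=\{\alpha\in O: R(\alpha)\equiv 1\pmod 4\}$. $G$ is the set of Gaussian integers $(1+i)^{a_1}p_2^{a_2}\cdots p_m^{a_m}$ with integers $a_j\ge0$ and $p_j$ distinct Gaussian primes in $O^I$. *)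

theory Defs
  imports Complex_Main
begin

definition gauss_ints :: "complex set" where
  "gauss_ints = {z. \<exists>a b :: int. z = Complex (of_int a) (of_int b)}"

definition gdvd :: "complex \<Rightarrow> complex \<Rightarrow> bool" where
  "gdvd a b \<longleftrightarrow> (\<exists>c\<in>gauss_ints. b = a * c)"

definition gunits :: "complex set" where
  "gunits = {1, -1, \<i>, -\<i>}"

definition gprime :: "complex \<Rightarrow> bool" where
  "gprime p \<longleftrightarrow> p \<in> gauss_ints \<and> p \<noteq> 0 \<and> p \<notin> gunits \<and>
     (\<forall>a\<in>gauss_ints. \<forall>b\<in>gauss_ints. gdvd p (a * b) \<longrightarrow> gdvd p a \<or> gdvd p b)"

definition gO :: "complex set" where
  "gO = {z. \<exists>a b :: int. z = Complex (of_int a) (of_int b) \<and> odd (a + b)}"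

definition gOI :: "complex set" where
  "gOI = {z. \<exists>a b :: int. z = Complex (of_int a) (of_int b) \<and> odd (a + b) \<and> a mod 4 = 1}"

definition gG :: "complex set" where
  "gG = {z. \<exists>(a::nat) (F::complex set) (e::complex \<Rightarrow> nat).
            finite F \<and> (\<forall>p\<in>F. gprime p \<and> p \<in> gOI) \<and>
            z = (1 + \<i>) ^ a * (\<Prod>p\<in>F. p ^ e p)}"

definition gcd_unit :: "complex \<Rightarrow> complex \<Rightarrow> bool" where
  "gcd_unit x y \<longleftrightarrow> (\<forall>d\<in>gauss_ints. gdvd d x \<and> gdvd d y \<longrightarrow> d \<in> gunits)"

text \<open>gcd(P,Q) = 1 for P, Q in G: no common prime factor.\<close>
definition no_common_prime :: "complex \<Rightarrow> complex \<Rightarrow> bool" where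
  "no_common_prime x y \<longleftrightarrow> \<not> (\<exists>p. gprime p \<and> gdvd p x \<and> gdvd p y)"

end

theory Submission
  imports Defs
begin

text \<open>Put \<open>\<alpha> = (Z + X)/2\<close> and \<open>\<beta> = (Z - X)/2\<close>; they are Gaussian integers because elements of
  \<open>O\<^sup>I\<close> have odd real and even imaginary part. Then \<open>\<alpha>\<beta> = (Z\<^sup>2 - X\<^sup>2)/4 = i Y\<^sup>2/4 = -i W\<^sup>2\<close>,
  and \<open>\<alpha>, \<beta>\<close> are coprime, since a common prime would divide \<open>X\<close>, \<open>Z\<close> and hence \<open>Y\<close>.
  As \<open>W \<in> G\<close>, unique factorisation gives \<open>\<alpha> = v P\<^sup>2\<close>, \<open>\<beta> = w Q\<^sup>2\<close> with \<open>P, Q \<in> G\<close>,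
  \<open>PQ = W\<close> and units \<open>v w = -i\<close>; the four choices \<open>v = i^(t+1)\<close> give the four values of \<open>t\<close>.\<close>

lemma gauss_ints_iff: "z \<in> gauss_ints \<longleftrightarrow> Re z \<in> \<int> \<and> Im z \<in> \<int>"
proof
  assume "z \<in> gauss_ints"
  then show "Re z \<in> \<int> \<and> Im z \<in> \<int>"
    unfolding gauss_ints_def by auto
next
  assume "Re z \<in> \<int> \<and> Im z \<in> \<int>"
  then obtain a b where "Re z = of_int a" "Im z = of_int b"
    by (auto elim!: Ints_cases)
  then have "z = Complex (of_int a) (of_int b)"
    by (simp add: complex_eq_iff)
  then show "z \<in> gauss_ints"
    unfolding gauss_ints_def by blast
qed

lemma gauss_ints_add [intro]: "a \<in> gauss_ints \<Longrightarrow> b \<in> gauss_ints \<Longrightarrow> a + b \<in> gauss_ints"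
  and gauss_ints_diff [intro]: "a \<in> gauss_ints \<Longrightarrow> b \<in> gauss_ints \<Longrightarrow> a - b \<in> gauss_ints"
  and gauss_ints_mult [intro]: "a \<in> gauss_ints \<Longrightarrow> b \<in> gauss_ints \<Longrightarrow> a * b \<in> gauss_ints"
  and gauss_ints_one [simp, intro]: "1 \<in> gauss_ints"
  and gauss_ints_i [simp, intro]: "\<i> \<in> gauss_ints"
  by (simp_all add: gauss_ints_iff)

lemma gauss_ints_power [intro]: "a \<in> gauss_ints \<Longrightarrow> a ^ n \<in> gauss_ints"
  by (induction n) auto

lemma gauss_ints_prod [intro]: "(\<And>x. x \<in> A \<Longrightarrow> f x \<in> gauss_ints) \<Longrightarrow> prod f A \<in> gauss_ints"
  by (induction A rule: infinite_finite_induct) auto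

lemma gauss_ints_half:
  assumes "Re z = of_int m" "Im z = of_int n" "even m" "even n"
  shows "z / 2 \<in> gauss_ints"
proof -
  obtain k l where "m = 2 * k" "n = 2 * l"
    using assms(3,4) by (auto elim!: evenE)
  then have "Re (z / 2) = of_int k" "Im (z / 2) = of_int l"
    using assms(1,2) by simp_all
  then show ?thesis
    by (simp add: gauss_ints_iff)
qed

lemma gdvd_trans: "gdvd a b \<Longrightarrow> gdvd b c \<Longrightarrow> gdvd a c"
  unfolding gdvd_def by (metis gauss_ints_mult mult.assoc)

lemma gdvd_mult_right: "gdvd a b \<Longrightarrow> c \<in> gauss_ints \<Longrightarrow> gdvd a (b * c)"
  unfolding gdvd_def by (metis gauss_ints_mult mult.assoc)

lemma gdvd_add: "gdvd a b \<Longrightarrow> gdvd a c \<Longrightarrow> gdvd a (b + c)"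
  unfolding gdvd_def by (metis gauss_ints_add distrib_left)

lemma gdvd_diff: "gdvd a b \<Longrightarrow> gdvd a c \<Longrightarrow> gdvd a (b - c)"
  unfolding gdvd_def by (metis gauss_ints_diff right_diff_distrib)

lemma gunits_subset_gauss_ints: "gunits \<subseteq> gauss_ints"
  by (auto simp: gunits_def gauss_ints_iff)

lemma int_sum_squares_eq_1:
  fixes a b :: int
  assumes "a\<^sup>2 + b\<^sup>2 = 1"
  shows "(a = 1 \<or> a = -1) \<and> b = 0 \<or> a = 0 \<and> (b = 1 \<or> b = -1)"
proof -
  have "a\<^sup>2 \<le> 1" "b\<^sup>2 \<le> 1"
    using assms zero_le_power2[of a] zero_le_power2[of b] by linarith+
  then have "\<bar>a\<bar> \<le> 1" "\<bar>b\<bar> \<le> 1"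
    by (metis abs_le_square_iff abs_one one_power2)+
  then have "a \<in> {-1, 0, 1}" "b \<in> {-1, 0, 1}"
    by auto
  then show ?thesis
    using assms by auto
qed

lemma gunits_iff_norm_eq_1:
  assumes "z \<in> gauss_ints"
  shows "z \<in> gunits \<longleftrightarrow> (Re z)\<^sup>2 + (Im z)\<^sup>2 = 1"
proof
  assume "(Re z)\<^sup>2 + (Im z)\<^sup>2 = 1"
  moreover obtain a b :: int where "z = Complex (of_int a) (of_int b)"
    using assms unfolding gauss_ints_def by blast
  ultimately show "z \<in> gunits"
    using int_sum_squares_eq_1[of a b] by (auto simp: gunits_def complex_eq_iff simp flip: of_int_power)
qed (auto simp: gunits_def)

lemma gunits_factor:
  assumes "a \<in> gauss_ints" "b \<in> gauss_ints" "a * b \<in> gunits"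
  shows "a \<in> gunits"
proof -
  obtain a1 a2 b1 b2 :: int where a: "a = Complex (of_int a1) (of_int a2)"
    and b: "b = Complex (of_int b1) (of_int b2)"
    using assms(1,2) unfolding gauss_ints_def by blast
  have "real_of_int ((a1\<^sup>2 + a2\<^sup>2) * (b1\<^sup>2 + b2\<^sup>2)) = ((Re a)\<^sup>2 + (Im a)\<^sup>2) * ((Re b)\<^sup>2 + (Im b)\<^sup>2)"
    by (simp add: a b)
  also have "\<dots> = (Re (a * b))\<^sup>2 + (Im (a * b))\<^sup>2"
    by (simp add: algebra_simps power2_eq_square)
  also have "\<dots> = 1"
    using gunits_iff_norm_eq_1[OF gauss_ints_mult[OF assms(1,2)]] assms(3) by blast
  finally have "(a1\<^sup>2 + a2\<^sup>2) * (b1\<^sup>2 + b2\<^sup>2) = 1"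
    by (simp only: of_int_eq_1_iff)
  then have "a1\<^sup>2 + a2\<^sup>2 = 1"
    using zmult_eq_1_iff[of "a1\<^sup>2 + a2\<^sup>2" "b1\<^sup>2 + b2\<^sup>2"] zero_le_power2[of a1] zero_le_power2[of a2] by linarith
  then show ?thesis
    using assms(1) gunits_iff_norm_eq_1 a by (simp flip: of_int_power)
qed

lemma gprime_dvd_mult:
  "gprime p \<Longrightarrow> a \<in> gauss_ints \<Longrightarrow> b \<in> gauss_ints \<Longrightarrow> gdvd p (a * b) \<Longrightarrow> gdvd p a \<or> gdvd p b"
  unfolding gprime_def by blast

lemma one_plus_i_dvd_iff: "gdvd (1 + \<i>) (Complex (of_int a) (of_int b)) \<longleftrightarrow> even (a + b)"
proof
  assume "gdvd (1 + \<i>) (Complex (of_int a) (of_int b))"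
  then obtain c1 c2 :: int where "Complex (of_int a) (of_int b) = (1 + \<i>) * Complex (of_int c1) (of_int c2)"
    unfolding gdvd_def gauss_ints_def by blast
  then have "a = c1 - c2" "b = c1 + c2"
    by (simp_all add: complex_eq_iff flip: of_int_diff of_int_add)
  then show "even (a + b)"
    by simp
next
  assume "even (a + b)"
  then obtain k where k: "a + b = 2 * k"
    by (rule evenE)
  have "Complex (of_int a) (of_int b) = (1 + \<i>) * Complex (of_int k) (of_int (k - a))"
    using k by (simp add: complex_eq_iff)
  then show "gdvd (1 + \<i>) (Complex (of_int a) (of_int b))"
    unfolding gdvd_def gauss_ints_def by blast
qed

lemma gprime_one_plus_i: "gprime (1 + \<i>)"
  unfolding gprime_def
proof (intro conjI ballI impI)
  fix a b
  assume "a \<in> gauss_ints" "b \<in> gauss_ints" and dvd: "gdvd (1 + \<i>) (a * b)"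
  then obtain a1 a2 b1 b2 :: int where a: "a = Complex (of_int a1) (of_int a2)"
    and b: "b = Complex (of_int b1) (of_int b2)"
    unfolding gauss_ints_def by blast
  have "a * b = Complex (of_int (a1 * b1 - a2 * b2)) (of_int (a1 * b2 + a2 * b1))"
    using a b by (simp add: complex_eq_iff)
  then have "even ((a1 * b1 - a2 * b2) + (a1 * b2 + a2 * b1))"
    using dvd one_plus_i_dvd_iff by metis
  moreover have "(a1 + a2) * (b1 + b2) = ((a1 * b1 - a2 * b2) + (a1 * b2 + a2 * b1)) + 2 * (a2 * b2)"
    by (simp add: algebra_simps)
  ultimately have "even (a1 + a2) \<or> even (b1 + b2)"
    by (metis dvd_add dvd_triv_left even_mult_iff)
  then show "gdvd (1 + \<i>) a \<or> gdvd (1 + \<i>) b"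
    using a b one_plus_i_dvd_iff by metis
qed (auto simp: gunits_def complex_eq_iff)

lemma gG_subset_gauss_ints: "gG \<subseteq> gauss_ints"
  unfolding gG_def gprime_def by auto

lemma gG_one: "1 \<in> gG"
  unfolding gG_def by (rule CollectI, rule exI[of _ 0], rule exI[of _ "{}"]) simp

lemma gG_mult_prime:
  assumes c: "c \<in> gG" and "gprime q" and q: "q = 1 + \<i> \<or> q \<in> gOI"
  shows "q * c \<in> gG"
proof -
  obtain a F e where F: "finite F" "\<forall>p\<in>F. gprime p \<and> p \<in> gOI"
    and c_eq: "c = (1 + \<i>) ^ a * (\<Prod>p\<in>F. p ^ e p)"
    using c unfolding gG_def by blast
  show ?thesis
    using q
  proof
    assume "q = 1 + \<i>"
    then have "q * c = (1 + \<i>) ^ Suc a * (\<Prod>p\<in>F. p ^ e p)"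
      using c_eq by simp
    then show ?thesis
      using F unfolding gG_def by blast
  next
    assume "q \<in> gOI"
    define e' where "e' = e(q := (if q \<in> F then e q else 0) + 1)"
    have "(\<Prod>p\<in>insert q F. p ^ e' p) = q ^ e' q * (\<Prod>p\<in>F - {q}. p ^ e' p)"
      using F(1) by (simp add: prod.insert_remove)
    also have "(\<Prod>p\<in>F - {q}. p ^ e' p) = (\<Prod>p\<in>F - {q}. p ^ e p)"
      by (rule prod.cong) (auto simp: e'_def)
    also have "q ^ e' q * (\<Prod>p\<in>F - {q}. p ^ e p) = q * (\<Prod>p\<in>F. p ^ e p)"
    proof (cases "q \<in> F")
      case True
      then have prod_F: "(\<Prod>p\<in>F. p ^ e p) = q ^ e q * (\<Prod>p\<in>F - {q}. p ^ e p)"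
        using F(1) by (simp add: prod.remove)
      have "q ^ e' q = q * q ^ e q"
        using True by (simp add: e'_def)
      then show ?thesis
        unfolding prod_F by (simp only: mult.assoc)
    qed (simp add: e'_def)
    finally have prod_insert: "(\<Prod>p\<in>insert q F. p ^ e' p) = q * (\<Prod>p\<in>F. p ^ e p)" .
    have "q * c = (1 + \<i>) ^ a * (\<Prod>p\<in>insert q F. p ^ e' p)"
      unfolding prod_insert c_eq by (simp only: ac_simps)
    moreover have "\<forall>p\<in>insert q F. gprime p \<and> p \<in> gOI"
      using F(2) \<open>gprime q\<close> \<open>q \<in> gOI\<close> by blast
    moreover have "finite (insert q F)"
      using F(1) by simp
    ultimately show ?thesis
      unfolding gG_def by blast
  qed
qed

lemma gG_induct [consumes 1, case_names one mult_prime]: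
  assumes "c \<in> gG" and one: "P 1"
    and mult_prime: "\<And>c p. c \<in> gG \<Longrightarrow> P c \<Longrightarrow> gprime p \<Longrightarrow> p = 1 + \<i> \<or> p \<in> gOI \<Longrightarrow> P (p * c)"
  shows "P c"
proof -
  have power: "P (p ^ n * c) \<and> p ^ n * c \<in> gG"
    if "P c" "c \<in> gG" "gprime p" "p = 1 + \<i> \<or> p \<in> gOI" for n c p
  proof (induction n)
    case 0
    then show ?case
      using that by simp
  next
    case (Suc n)
    then have "P (p * (p ^ n * c)) \<and> p * (p ^ n * c) \<in> gG"
      using that(3,4) mult_prime gG_mult_prime by blast
    then show ?case
      by (simp add: mult.assoc)
  qed
  obtain a F e where F: "finite F" "\<forall>p\<in>F. gprime p \<and> p \<in> gOI"
    and c: "c = (1 + \<i>) ^ a * (\<Prod>p\<in>F. p ^ e p)"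
    using \<open>c \<in> gG\<close> unfolding gG_def by blast
  from F have "P (\<Prod>p\<in>F. p ^ e p) \<and> (\<Prod>p\<in>F. p ^ e p) \<in> gG"
  proof (induction F rule: finite_induct)
    case empty
    then show ?case
      using one gG_one by simp
  next
    case (insert x F)
    then show ?case
      using power[of "\<Prod>p\<in>F. p ^ e p" x "e x"] by simp
  qed
  then show ?thesis
    using power[of "\<Prod>p\<in>F. p ^ e p" "1 + \<i>" a] gprime_one_plus_i c by simp
qed

lemma no_common_prime_sym: "no_common_prime a b \<Longrightarrow> no_common_prime b a"
  unfolding no_common_prime_def by blast

lemma no_common_prime_dvd_left: "no_common_prime a b \<Longrightarrow> gdvd a' a \<Longrightarrow> no_common_prime a' b"
  unfolding no_common_prime_def by (meson gdvd_trans)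

lemma gprime_square_cancel:
  assumes p: "gprime p" and "a \<in> gauss_ints" "b \<in> gauss_ints" "m \<in> gauss_ints"
    and "no_common_prime a b" "gdvd p a" and ab: "a * b = p\<^sup>2 * m"
  shows "\<exists>a'. a' \<in> gauss_ints \<and> a = p\<^sup>2 * a' \<and> a' * b = m"
proof -
  have p_nz: "p \<noteq> 0" and p_gi: "p \<in> gauss_ints"
    using p by (simp_all add: gprime_def)
  have "\<not> gdvd p b"
    using assms(5,6) p unfolding no_common_prime_def by blast
  obtain a1 where a1: "a1 \<in> gauss_ints" "a = p * a1"
    using \<open>gdvd p a\<close> unfolding gdvd_def by blast
  with ab p_nz have a1b: "a1 * b = p * m"
    by (simp add: power2_eq_square ac_simps)
  then have "gdvd p (a1 * b)"
    unfolding gdvd_def using \<open>m \<in> gauss_ints\<close> by blast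
  then have "gdvd p a1"
    using gprime_dvd_mult[OF p a1(1) \<open>b \<in> gauss_ints\<close>] \<open>\<not> gdvd p b\<close> by blast
  then obtain a' where "a' \<in> gauss_ints" "a1 = p * a'"
    unfolding gdvd_def by blast
  moreover from this a1b p_nz have "a' * b = m"
    by (simp add: ac_simps)
  ultimately show ?thesis
    using a1(2) by (intro exI[of _ a']) (simp add: power2_eq_square ac_simps)
qed

definition unit_square_split :: "complex \<Rightarrow> complex \<Rightarrow> complex \<Rightarrow> bool" where
  "unit_square_split c a b \<longleftrightarrow> (\<exists>d e v w. d \<in> gG \<and> e \<in> gG \<and> v \<in> gunits \<and> w \<in> gunits \<and>
     a = v * d\<^sup>2 \<and> b = w * e\<^sup>2 \<and> d * e = c)"

lemma unit_square_split_swap: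
  assumes "unit_square_split c a b"
  shows "unit_square_split c b a"
proof -
  obtain d e v w where "d \<in> gG" "e \<in> gG" "v \<in> gunits" "w \<in> gunits"
      "a = v * d\<^sup>2" "b = w * e\<^sup>2" "d * e = c"
    using assms unfolding unit_square_split_def by blast
  then show ?thesis
    unfolding unit_square_split_def
    by (intro exI[of _ e] exI[of _ d] exI[of _ w] exI[of _ v]) (simp add: mult.commute)
qed

lemma unit_square_split_mult_prime:
  assumes "unit_square_split c a b" "gprime p" "p = 1 + \<i> \<or> p \<in> gOI"
  shows "unit_square_split (p * c) (p\<^sup>2 * a) b"
proof -
  obtain d e v w where "d \<in> gG" "e \<in> gG" "v \<in> gunits" "w \<in> gunits"
      "a = v * d\<^sup>2" "b = w * e\<^sup>2" "d * e = c"
    using assms(1) unfolding unit_square_split_def by blast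
  moreover have "p * d \<in> gG"
    using gG_mult_prime \<open>d \<in> gG\<close> assms(2,3) by blast
  ultimately show ?thesis
    unfolding unit_square_split_def
    by (intro exI[of _ "p * d"] exI[of _ e] exI[of _ v] exI[of _ w]) (simp add: power_mult_distrib ac_simps)
qed

text \<open>The only use of unique factorisation: by induction over the prime factors of \<open>c\<close>, each
  prime enters \<open>a\<close> or \<open>b\<close> together with its full square.\<close>

lemma no_common_prime_mult_eq_unit_square:
  assumes "c \<in> gG" "a \<in> gauss_ints" "b \<in> gauss_ints" "u \<in> gunits"
    and "no_common_prime a b" "a * b = u * c\<^sup>2"
  shows "unit_square_split c a b"
  using assms
proof (induction arbitrary: a b u rule: gG_induct)
  case one
  then have "a \<in> gunits" "b \<in> gunits"
    using gunits_factor[of a b] gunits_factor[of b a] by (simp_all add: mult.commute)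
  then show ?case
    unfolding unit_square_split_def using gG_one by (intro exI[of _ 1] exI[of _ a] exI[of _ b]) simp
next
  case (mult_prime c p)
  have "u * c\<^sup>2 \<in> gauss_ints"
    using mult_prime.prems(3) \<open>c \<in> gG\<close> gunits_subset_gauss_ints gG_subset_gauss_ints by auto
  have split_left: "unit_square_split (p * c) a b"
    if gi: "a \<in> gauss_ints" "b \<in> gauss_ints" and coprime: "no_common_prime a b"
      and eq: "a * b = p\<^sup>2 * (u * c\<^sup>2)" and dvd: "gdvd p a" for a b
  proof -
    obtain a' where a': "a' \<in> gauss_ints" "a = p\<^sup>2 * a'" "a' * b = u * c\<^sup>2"
      using gprime_square_cancel[OF \<open>gprime p\<close> gi \<open>u * c\<^sup>2 \<in> gauss_ints\<close> coprime dvd eq] by blast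
    have "gdvd a' a"
      unfolding gdvd_def using a'(2) \<open>gprime p\<close> by (intro bexI[of _ "p\<^sup>2"]) (auto simp: gprime_def mult.commute)
    then have "no_common_prime a' b"
      by (rule no_common_prime_dvd_left[OF coprime])
    then have "unit_square_split c a' b"
      by (rule mult_prime.IH[OF a'(1) gi(2) mult_prime.prems(3) _ a'(3)])
    then show ?thesis
      unfolding a'(2) using \<open>gprime p\<close> \<open>p = 1 + \<i> \<or> p \<in> gOI\<close> by (rule unit_square_split_mult_prime)
  qed
  have ab: "a * b = p\<^sup>2 * (u * c\<^sup>2)"
    using mult_prime.prems(5) by (simp add: power_mult_distrib ac_simps)
  then have "gdvd p (a * b)"
    unfolding gdvd_def using \<open>u * c\<^sup>2 \<in> gauss_ints\<close> \<open>gprime p\<close>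
    by (intro bexI[of _ "p * (u * c\<^sup>2)"]) (auto simp: gprime_def power2_eq_square)
  then consider "gdvd p a" | "gdvd p b"
    using gprime_dvd_mult[OF \<open>gprime p\<close> mult_prime.prems(1,2)] by blast
  then show ?case
  proof cases
    case 1
    then show ?thesis
      using split_left[OF mult_prime.prems(1,2,4) ab] by blast
  next
    case 2
    have ba: "b * a = p\<^sup>2 * (u * c\<^sup>2)"
      using ab by (simp add: mult.commute)
    have "unit_square_split (p * c) b a"
      using split_left[OF mult_prime.prems(2,1) no_common_prime_sym[OF mult_prime.prems(4)] ba 2] .
    then show ?thesis
      by (rule unit_square_split_swap)
  qed
qed

lemma gunits_mult_eq_minus_i:
  assumes "v \<in> gunits" "v * w = - \<i>"
  shows "\<exists>t::nat. t \<le> 3 \<and> v = \<i> ^ (t + 1) \<and> w = (-1) ^ t * \<i> * \<i> ^ (t + 1)"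
proof -
  from assms(1) consider "v = \<i>" | "v = -1" | "v = - \<i>" | "v = 1"
    by (auto simp: gunits_def)
  then show ?thesis
  proof cases
    case 1
    then show ?thesis
      using assms(2) by (intro exI[of _ 0]) (auto simp: complex_eq_iff eval_nat_numeral)
  next
    case 2
    then show ?thesis
      using assms(2) by (intro exI[of _ 1]) (auto simp: complex_eq_iff eval_nat_numeral)
  next
    case 3
    then show ?thesis
      using assms(2) by (intro exI[of _ 2]) (auto simp: complex_eq_iff eval_nat_numeral)
  next
    case 4
    then show ?thesis
      using assms(2) by (intro exI[of _ 3]) (auto simp: complex_eq_iff eval_nat_numeral)
  qed
qed

lemma no_common_prime_mult_eq_minus_i_square:
  assumes "W \<in> gG" "W \<noteq> 0" "\<alpha> \<in> gauss_ints" "\<beta> \<in> gauss_ints"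
    and coprime: "no_common_prime \<alpha> \<beta>" and \<alpha>\<beta>: "\<alpha> * \<beta> = - \<i> * W\<^sup>2"
  shows "\<exists>(t::nat) P Q. t \<le> 3 \<and> P \<in> gG \<and> Q \<in> gG \<and> no_common_prime P Q \<and> P * Q = W \<and>
           \<alpha> = \<i> ^ (t + 1) * P\<^sup>2 \<and> \<beta> = (-1) ^ t * \<i> * \<i> ^ (t + 1) * Q\<^sup>2"
proof -
  have "- \<i> \<in> gunits"
    by (simp add: gunits_def)
  then obtain P Q v w where PQ: "P \<in> gG" "Q \<in> gG" "v \<in> gunits" "w \<in> gunits"
      "\<alpha> = v * P\<^sup>2" "\<beta> = w * Q\<^sup>2" "P * Q = W"
    using no_common_prime_mult_eq_unit_square[OF assms(1,3,4) _ coprime \<alpha>\<beta>]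
    unfolding unit_square_split_def by blast
  have "v * w * W\<^sup>2 = - \<i> * W\<^sup>2"
    using \<alpha>\<beta> PQ(5,6) unfolding PQ(7)[symmetric] by (simp add: power_mult_distrib ac_simps)
  then have "v * w = - \<i>"
    using \<open>W \<noteq> 0\<close> by (metis mult_right_cancel power_not_zero)
  then obtain t :: nat where t: "t \<le> 3" "v = \<i> ^ (t + 1)" "w = (-1) ^ t * \<i> * \<i> ^ (t + 1)"
    using gunits_mult_eq_minus_i[OF PQ(3)] by blast
  have P_dvd: "gdvd P \<alpha>"
    unfolding gdvd_def using PQ(1,3,5) gG_subset_gauss_ints gunits_subset_gauss_ints
    by (intro bexI[of _ "v * P"]) (auto simp: power2_eq_square)
  have Q_dvd: "gdvd Q \<beta>"
    unfolding gdvd_def using PQ(2,4,6) gG_subset_gauss_ints gunits_subset_gauss_ints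
    by (intro bexI[of _ "w * Q"]) (auto simp: power2_eq_square)
  have "no_common_prime P Q"
    using no_common_prime_sym[OF no_common_prime_dvd_left[OF
        no_common_prime_sym[OF no_common_prime_dvd_left[OF coprime P_dvd]] Q_dvd]] .
  then show ?thesis
    using t PQ by (intro exI[of _ t] exI[of _ P] exI[of _ Q]) simp
qed

lemma gOI_half_sum_diff:
  assumes "X \<in> gOI" "Z \<in> gOI"
  shows "(Z + X) / 2 \<in> gauss_ints" "(Z - X) / 2 \<in> gauss_ints"
proof -
  obtain x1 x2 :: int where X: "X = Complex (of_int x1) (of_int x2)" "odd (x1 + x2)" "x1 mod 4 = 1"
    using assms(1) unfolding gOI_def by blast
  obtain z1 z2 :: int where Z: "Z = Complex (of_int z1) (of_int z2)" "odd (z1 + z2)" "z1 mod 4 = 1"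
    using assms(2) unfolding gOI_def by blast
  \<comment> \<open>the real parts are odd, so the imaginary parts are even\<close>
  have "even (z1 + x1)" "even (z2 + x2)" "even (z1 - x1)" "even (z2 - x2)"
    using X(2,3) Z(2,3) by presburger+
  then show "(Z + X) / 2 \<in> gauss_ints" "(Z - X) / 2 \<in> gauss_ints"
    using gauss_ints_half[of "Z + X" "z1 + x1" "z2 + x2"] gauss_ints_half[of "Z - X" "z1 - x1" "z2 - x2"]
    by (simp_all add: X(1) Z(1))
qed

lemma no_common_prime_half_sum_diff:
  assumes "X \<in> gauss_ints" "Y \<in> gauss_ints" "Z \<in> gauss_ints"
    and pyth: "X\<^sup>2 + \<i> * Y\<^sup>2 = Z\<^sup>2" and "gcd_unit X Y"
  shows "no_common_prime ((Z + X) / 2) ((Z - X) / 2)"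
  unfolding no_common_prime_def
proof
  assume "\<exists>p. gprime p \<and> gdvd p ((Z + X) / 2) \<and> gdvd p ((Z - X) / 2)"
  then obtain p where p: "gprime p" "gdvd p ((Z + X) / 2)" "gdvd p ((Z - X) / 2)"
    by blast
  have "(Z + X) / 2 - (Z - X) / 2 = X" "(Z + X) / 2 + (Z - X) / 2 = Z"
    by (simp_all add: field_simps)
  then have "gdvd p X" "gdvd p Z"
    using gdvd_diff[OF p(2,3)] gdvd_add[OF p(2,3)] by simp_all
  then have "gdvd p ((Z * Z - X * X) * - \<i>)"
    using assms(1,3) by (intro gdvd_mult_right gdvd_diff) (auto simp: gauss_ints_iff)
  moreover have "Z\<^sup>2 - X\<^sup>2 = \<i> * Y\<^sup>2"
    using pyth by (metis add_diff_cancel_left')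
  then have "(Z * Z - X * X) * - \<i> = Y * Y"
    by (simp add: power2_eq_square algebra_simps)
  ultimately have "gdvd p Y"
    using gprime_dvd_mult[OF p(1) assms(2,2)] by auto
  then have "p \<in> gunits"
    using \<open>gdvd p X\<close> \<open>gcd_unit X Y\<close> p(1) unfolding gcd_unit_def gprime_def by blast
  then show False
    using p(1) unfolding gprime_def by blast
qed

theorem theorem4p11:
  fixes X Y Z W :: complex
  assumes "X \<in> gauss_ints" and "Y \<in> gauss_ints" and "Z \<in> gauss_ints"
    and "X\<^sup>2 + \<i> * Y\<^sup>2 = Z\<^sup>2"
    and "gcd_unit X Y"
    and "X * Y * Z \<noteq> 0"
    and "X \<in> gOI" and "Z \<in> gOI"
    and "W \<in> gG" and "Y = (1 + \<i>)\<^sup>2 * W"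
  shows "\<exists>(t::nat) P Q. t \<le> 3 \<and> P \<in> gG \<and> Q \<in> gG \<and> no_common_prime P Q \<and>
           X = \<i> ^ (t + 1) * (P\<^sup>2 - (-1) ^ t * \<i> * Q\<^sup>2) \<and>
           Y = (1 + \<i>)\<^sup>2 * P * Q \<and>
           Z = \<i> ^ (t + 1) * (P\<^sup>2 + (-1) ^ t * \<i> * Q\<^sup>2)"
proof -
  define \<alpha> \<beta> where "\<alpha> = (Z + X) / 2" and "\<beta> = (Z - X) / 2"
  have X: "X = \<alpha> - \<beta>" and Z: "Z = \<alpha> + \<beta>"
    unfolding \<alpha>_def \<beta>_def by (simp_all add: field_simps)
  have gi: "\<alpha> \<in> gauss_ints" "\<beta> \<in> gauss_ints"
    unfolding \<alpha>_def \<beta>_def using assms(7,8) by (rule gOI_half_sum_diff)+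
  have coprime: "no_common_prime \<alpha> \<beta>"
    unfolding \<alpha>_def \<beta>_def using assms(1-5) by (rule no_common_prime_half_sum_diff)
  have prod: "\<alpha> * \<beta> = - \<i> * W\<^sup>2"
    using assms(4,10) unfolding \<alpha>_def \<beta>_def by (simp add: field_simps power2_eq_square flip: assms(4))
  have "W \<noteq> 0"
    using assms(6,10) by auto
  obtain t :: nat and P Q where "t \<le> 3" "P \<in> gG" "Q \<in> gG" "no_common_prime P Q" "P * Q = W"
      "\<alpha> = \<i> ^ (t + 1) * P\<^sup>2" "\<beta> = (-1) ^ t * \<i> * \<i> ^ (t + 1) * Q\<^sup>2"
    using no_common_prime_mult_eq_minus_i_square[OF assms(9) \<open>W \<noteq> 0\<close> gi coprime prod] by blast
  then show ?thesis
    using assms(10) unfolding X Z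
    by (intro exI[of _ t] exI[of _ P] exI[of _ Q]) (simp add: algebra_simps)
qed

end
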